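(* Let $K$ be the complete graph on $X \cup Y$, where $X$ and $Y$ are disjoint sets of size $n$. Let $F$ be a subgraph of $K$ containing no triangle that meets both $X$ and $Y$. Then $|F|\leq n^2$.
   Context: $|F|$ denotes the number of edges of $F$. *)

theory Defs
  imports Main
begin

definition complete_edges :: "'a set \<Rightarrow> 'a set set" where
  "complete_edges V = {e. e \<subseteq> V \<and> card e = 2}"

definition is_triangle :: "'a set set \<Rightarrow> 'a \<Rightarrow> 'a \<Rightarrow> 'a \<Rightarrow> bool" where
  "is_triangle F a b c \<longleftrightarrow> a \<noteq> b \<and> b \<noteq> c \<and> a \<noteq> c \<and>
     {a,b} \<in> F \<and> {b,c} \<in> F \<and> {a,c} \<in> F"

end

theory Submission
  imports Defs
begin

text \<open>Induction on \<open>n\<close>. If \<open>F\<close> has no edge between \<open>X\<close> and \<open>Y\<close>, it has at most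
  \<open>2 (n choose 2) \<le> n\<^sup>2\<close> edges. Otherwise pick such an edge \<open>xy\<close>: no other vertex is joined
  to both \<open>x\<close> and \<open>y\<close>, since that would give a triangle meeting both parts, so \<open>x\<close> and
  \<open>y\<close> together carry at most \<open>1 + 2(n - 1)\<close> edges. Deleting \<open>x\<close> and \<open>y\<close> and applying the
  induction hypothesis gives \<open>(n - 1)\<^sup>2 + 2n - 1 = n\<^sup>2\<close>.\<close>

definition cross_triangle_free :: "'a set \<Rightarrow> 'a set \<Rightarrow> 'a set set \<Rightarrow> bool" where
  "cross_triangle_free X Y F \<longleftrightarrow>
     (\<forall>a b c. is_triangle F a b c \<longrightarrow> \<not> ({a,b,c} \<inter> X \<noteq> {} \<and> {a,b,c} \<inter> Y \<noteq> {}))"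

lemma is_triangle_mono: "F \<subseteq> G \<Longrightarrow> is_triangle F a b c \<Longrightarrow> is_triangle G a b c"
  unfolding is_triangle_def by blast

lemma cross_triangle_free_mono:
  assumes "cross_triangle_free X Y G" "F \<subseteq> G" "X' \<subseteq> X" "Y' \<subseteq> Y"
  shows "cross_triangle_free X' Y' F"
  unfolding cross_triangle_free_def
proof (intro allI impI)
  fix a b c assume "is_triangle F a b c"
  with assms(2) have "is_triangle G a b c"
    by (rule is_triangle_mono)
  with assms(1) have "\<not> ({a,b,c} \<inter> X \<noteq> {} \<and> {a,b,c} \<inter> Y \<noteq> {})"
    unfolding cross_triangle_free_def by blast
  then show "\<not> ({a,b,c} \<inter> X' \<noteq> {} \<and> {a,b,c} \<inter> Y' \<noteq> {})"
    using assms(3,4) by blast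
qed

lemma complete_edgesE:
  assumes "e \<in> complete_edges V"
  obtains a b where "e = {a,b}" "a \<noteq> b" "a \<in> V" "b \<in> V"
  using assms unfolding complete_edges_def by (auto simp: card_2_iff)

lemma doubleton_in_complete_edges_iff [simp]:
  "{a,b} \<in> complete_edges V \<longleftrightarrow> a \<noteq> b \<and> a \<in> V \<and> b \<in> V"
  unfolding complete_edges_def by (auto simp: card_2_iff)

lemma complete_edges_empty [simp]: "complete_edges {} = {}"
  unfolding complete_edges_def by auto

lemma finite_complete_edges: "finite V \<Longrightarrow> finite (complete_edges V)"
  unfolding complete_edges_def by (rule finite_subset[of _ "Pow V"]) auto

lemma card_complete_edges: "finite V \<Longrightarrow> card (complete_edges V) = card V choose 2"
  unfolding complete_edges_def by (rule n_subsets)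

lemma complete_edges_Un_subset:
  assumes "\<forall>x\<in>X. \<forall>y\<in>Y. {x,y} \<notin> F" "F \<subseteq> complete_edges (X \<union> Y)"
  shows "F \<subseteq> complete_edges X \<union> complete_edges Y"
proof
  fix e assume "e \<in> F"
  with assms(2) obtain a b where e: "e = {a,b}" "a \<noteq> b" "a \<in> X \<union> Y" "b \<in> X \<union> Y"
    by (blast elim: complete_edgesE)
  have "\<not> (a \<in> X \<and> b \<in> Y)" "\<not> (b \<in> X \<and> a \<in> Y)"
    using assms(1) \<open>e \<in> F\<close> e(1) by (auto simp: insert_commute)
  with e show "e \<in> complete_edges X \<union> complete_edges Y"
    by auto
qed

lemma card_le_if_no_cross_edge:
  assumes "finite X" "finite Y" "F \<subseteq> complete_edges (X \<union> Y)"
    and "\<forall>x\<in>X. \<forall>y\<in>Y. {x,y} \<notin> F"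
  shows "card F \<le> (card X choose 2) + (card Y choose 2)"
proof -
  have "card F \<le> card (complete_edges X \<union> complete_edges Y)"
    using assms by (intro card_mono complete_edges_Un_subset) (simp_all add: finite_complete_edges)
  also have "\<dots> \<le> card (complete_edges X) + card (complete_edges Y)"
    by (rule card_Un_le)
  finally show ?thesis
    using assms(1,2) by (simp add: card_complete_edges)
qed

lemma double_choose_two_le: "2 * (n choose 2) \<le> n\<^sup>2"
proof -
  have "2 * (n choose 2) \<le> n * (n - 1)"
    unfolding choose_two by simp
  also have "\<dots> \<le> n\<^sup>2"
    by (simp add: power2_eq_square)
  finally show ?thesis .
qed

text \<open>Every edge at \<open>x\<close> or \<open>y\<close> other than \<open>{x,y}\<close> is \<open>cover z\<close> for its remaining endpoint
  \<open>z\<close>: an edge \<open>{y,z}\<close> is not missed, as \<open>{x,z}\<close> and \<open>{y,z}\<close> together would close a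
  triangle with \<open>{x,y}\<close>.\<close>

lemma card_le_card_delete_edge_ends:
  assumes "finite V" "F \<subseteq> complete_edges V" "{x,y} \<in> F"
    and no_triangle: "\<And>z. \<not> is_triangle F x y z"
  shows "card F \<le> card (F \<inter> complete_edges (V - {x,y})) + (card V - 1)"
proof -
  define V' where "V' = V - {x,y}"
  define cover where "cover z = (if {x,z} \<in> F then {x,z} else {y,z})" for z
  have "{x,y} \<in> complete_edges V"
    using assms(2,3) by blast
  then have xy: "x \<noteq> y" "x \<in> V" "y \<in> V"
    by simp_all
  have "F - complete_edges V' \<subseteq> insert {x,y} (cover ` V')"
  proof
    fix e assume e: "e \<in> F - complete_edges V'"
    with assms(2) obtain a b where ab: "e = {a,b}" "a \<noteq> b" "a \<in> V" "b \<in> V"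
      by (blast elim: complete_edgesE)
    with e have touches: "x \<in> e \<or> y \<in> e"
      unfolding V'_def by auto
    obtain u z where uz: "e = {u,z}" "u = x \<or> u = y" "u \<noteq> z" "z \<in> V"
    proof (cases "a = x \<or> a = y")
      case True
      then show ?thesis
        using ab by (intro that[of a b]) auto
    next
      case False
      then have "b = x \<or> b = y"
        using touches ab by auto
      then show ?thesis
        using ab by (intro that[of b a]) (auto simp: insert_commute)
    qed
    show "e \<in> insert {x,y} (cover ` V')"
    proof (cases "z = x \<or> z = y")
      case True
      with uz show ?thesis by (auto simp: insert_commute)
    next
      case False
      have "\<not> ({x,z} \<in> F \<and> {y,z} \<in> F)"
        using no_triangle[of z] assms(3) False xy(1) unfolding is_triangle_def by (auto simp: insert_commute)
      then have "e = cover z"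
        using uz e unfolding cover_def by auto
      with False uz(4) show ?thesis
        unfolding V'_def by auto
    qed
  qed
  then have "card (F - complete_edges V') \<le> card (insert {x,y} (cover ` V'))"
    using assms(1) unfolding V'_def by (intro card_mono) auto
  also have "\<dots> \<le> Suc (card (cover ` V'))"
    using assms(1) unfolding V'_def by (simp add: card_insert_if)
  also have "\<dots> \<le> Suc (card V')"
    using assms(1) unfolding V'_def by (simp add: card_image_le)
  also have "\<dots> = card V - 1"
  proof -
    have "card {x,y} \<le> card V"
      using assms(1) xy by (intro card_mono) auto
    then show ?thesis
      using assms(1) xy unfolding V'_def by (simp add: card_Diff_subset)
  qed
  finally have "card (F - complete_edges V') \<le> card V - 1" .
  moreover have "finite F"
    using assms(1,2) finite_complete_edges finite_subset by blast
  ultimately show ?thesis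
    unfolding V'_def by (simp add: card_Int_Diff[of F "complete_edges (V - {x,y})"])
qed

theorem mainTheorem3:
  fixes X Y :: "'a set" and F :: "'a set set" and n :: nat
  assumes "finite X" and "finite Y" and "X \<inter> Y = {}"
    and "card X = n" and "card Y = n"
    and "F \<subseteq> complete_edges (X \<union> Y)"
    and "\<forall>a b c. is_triangle F a b c \<longrightarrow>
           \<not> ({a,b,c} \<inter> X \<noteq> {} \<and> {a,b,c} \<inter> Y \<noteq> {})"
  shows "card F \<le> n ^ 2"
  using assms(1-6) assms(7)[folded cross_triangle_free_def]
proof (induction n arbitrary: X Y F)
  case 0
  then show ?case by simp
next
  case (Suc m)
  show ?case
  proof (cases "\<forall>x\<in>X. \<forall>y\<in>Y. {x,y} \<notin> F")
    case True
    then have "card F \<le> 2 * (Suc m choose 2)"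
      using Suc.prems card_le_if_no_cross_edge[of X Y F] by simp
    then show ?thesis
      using double_choose_two_le order_trans by blast
  next
    case False
    then obtain x y where xy: "x \<in> X" "y \<in> Y" "{x,y} \<in> F" by blast
    have rest: "X \<union> Y - {x,y} = (X - {x}) \<union> (Y - {y})"
      using xy Suc.prems(3) by auto
    have "card (F \<inter> complete_edges (X \<union> Y - {x,y})) \<le> m\<^sup>2"
      unfolding rest
    proof (rule Suc.IH)
      show "card (X - {x}) = m" "card (Y - {y}) = m"
        using Suc.prems xy by simp_all
      show "cross_triangle_free (X - {x}) (Y - {y}) (F \<inter> complete_edges (X - {x} \<union> (Y - {y})))"
        using Suc.prems(7) by (rule cross_triangle_free_mono) auto
    qed (use Suc.prems in auto)
    moreover have "card F \<le> card (F \<inter> complete_edges (X \<union> Y - {x,y})) + (card (X \<union> Y) - 1)"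
    proof (rule card_le_card_delete_edge_ends)
      show "\<not> is_triangle F x y z" for z
        using Suc.prems(7) xy unfolding cross_triangle_free_def by blast
    qed (use Suc.prems xy in auto)
    moreover have "card (X \<union> Y) = 2 * Suc m"
      using Suc.prems by (simp add: card_Un_disjoint)
    ultimately show ?thesis
      by (simp add: power2_eq_square)
  qed
qed

end
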